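(* Let $V,H,K,i,j,\mathfrak a,V_D$ be as in the standing setting. For $\mu\le 0$ and $f\in H$ let $R_\mu f$ be the unique $u\in V$ with $\mathfrak a(u,v)-\mu(j(u),j(v))_K+(u,v)_H=(f,v)_H$ for all $v\in V$ (i.e. $R_\mu=(I+A_\mu)^{-1}$), and let $R^D f$ be the unique $u\in V_D$ with $\mathfrak a(u,v)+(u,v)_H=(f,v)_H$ for all $v\in V_D$ (i.e. $R^D=(I+\widehat A^D)^{-1}$). Then $R_\mu$ and $R^D$ are bounded operators on $H$ and $\lim_{\mu\to-\infty}\|R_\mu-R^D\|_{\mathcal L(H)}=0$.
   Context: Standing setting: $V,H,K$ complex Hilbert spaces, $V$ embedded in $H$ with compact inclusion $i\colon V\to H$, $j\colon V\to K$ compact linear, $\mathfrak a\colon V\times V\to\mathbb C$ a positive ($\mathfrak a(u,u)\ge0$), symmetric ($\mathfrak a(v,u)=\overline{\mathfrak a(u,v)}$), continuous sesquilinear form which is $i$-elliptic: there are $\omega,\delta>0$ with $\mathfrak a(u,u)+\omega\|u\|_H^2\ge\delta\|u\|_V^2$ for all $u\in V$. $V_D=\ker j$. For $\mu\in\mathbb R$, $\mathfrak a_\mu(u,v)=\mathfrak a(u,v)-\mu(j(u),j(v))_K$, and $A_\mu$ denotes the self-adjoint graph in $H$ associated with $(\mathfrak a_\mu,i)$, i.e. $\{(u,f)\in H\times H: u\in V,\ \mathfrak a_\mu(u,v)=(f,v)_H\ \forall v\in V\}$; $\widehat A^D$ is the graph $\{(u,f): u\in V_D,\ \mathfrak a(u,v)=(f,v)_H\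 \forall v\in V_D\}$. *)

theory Defs
  imports "HOL-Analysis.Analysis"
begin

text \<open>A complex Hilbert space is modelled as a real Banach space type 'a together with
  a complex scalar multiplication cm extending the real one and a complex inner product ip
  (linear in the first, conjugate linear in the second argument) inducing the norm of 'a.\<close>

definition complex_hilbert :: "(complex \<Rightarrow> 'a::banach \<Rightarrow> 'a) \<Rightarrow> ('a \<Rightarrow> 'a \<Rightarrow> complex) \<Rightarrow> bool" where
  "complex_hilbert cm ip \<longleftrightarrow>
     (\<forall>r x. cm (complex_of_real r) x = r *\<^sub>R x) \<and>
     (\<forall>a b x. cm (a * b) x = cm a (cm b x)) \<and>
     (\<forall>a x y. cm a (x + y) = cm a x + cm a y) \<and>
     (\<forall>a b x. cm (a + b) x = cm a x + cm b x) \<and>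
     (\<forall>x y z. ip (x + y) z = ip x z + ip y z) \<and>
     (\<forall>c x y. ip (cm c x) y = c * ip x y) \<and>
     (\<forall>x y. ip y x = cnj (ip x y)) \<and>
     (\<forall>x. (norm x)\<^sup>2 = Re (ip x x))"

definition cbounded_linear :: "(complex \<Rightarrow> 'a::real_normed_vector \<Rightarrow> 'a) \<Rightarrow> (complex \<Rightarrow> 'b::real_normed_vector \<Rightarrow> 'b) \<Rightarrow> ('a \<Rightarrow> 'b) \<Rightarrow> bool" where
  "cbounded_linear cmA cmB T \<longleftrightarrow> bounded_linear T \<and> (\<forall>c x. T (cmA c x) = cmB c (T x))"

definition compact_op :: "(complex \<Rightarrow> 'a::real_normed_vector \<Rightarrow> 'a) \<Rightarrow> (complex \<Rightarrow> 'b::real_normed_vector \<Rightarrow> 'b) \<Rightarrow> ('a \<Rightarrow> 'b) \<Rightarrow> bool" where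
  "compact_op cmA cmB T \<longleftrightarrow> cbounded_linear cmA cmB T \<and> compact (closure (T ` ball 0 1))"

definition sesquilinear_cont :: "(complex \<Rightarrow> 'a::real_normed_vector \<Rightarrow> 'a) \<Rightarrow> ('a \<Rightarrow> 'a \<Rightarrow> complex) \<Rightarrow> bool" where
  "sesquilinear_cont cm a \<longleftrightarrow>
     (\<forall>u u' v. a (u + u') v = a u v + a u' v) \<and>
     (\<forall>c u v. a (cm c u) v = c * a u v) \<and>
     (\<forall>u v v'. a u (v + v') = a u v + a u v') \<and>
     (\<forall>c u v. a u (cm c v) = cnj c * a u v) \<and>
     (\<exists>M. \<forall>u v. cmod (a u v) \<le> M * norm u * norm v)"

definition R_mu :: "('v \<Rightarrow> 'v \<Rightarrow> complex) \<Rightarrow> ('h \<Rightarrow> 'h \<Rightarrow> complex) \<Rightarrow> ('k \<Rightarrow> 'k \<Rightarrow> complex)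
    \<Rightarrow> ('v \<Rightarrow> 'h) \<Rightarrow> ('v \<Rightarrow> 'k) \<Rightarrow> real \<Rightarrow> 'h \<Rightarrow> 'h" where
  "R_mu a ipH ipK i j \<mu> f = i (THE u. \<forall>v. a u v - complex_of_real \<mu> * ipK (j u) (j v) + ipH (i u) (i v) = ipH f (i v))"

definition R_D :: "('v \<Rightarrow> 'v \<Rightarrow> complex) \<Rightarrow> ('h \<Rightarrow> 'h \<Rightarrow> complex)
    \<Rightarrow> ('v \<Rightarrow> 'h) \<Rightarrow> ('v \<Rightarrow> 'k::zero) \<Rightarrow> 'h \<Rightarrow> 'h" where
  "R_D a ipH i j f = i (THE u. j u = 0 \<and> (\<forall>v. j v = 0 \<longrightarrow> a u v + ipH (i u) (i v) = ipH f (i v)))"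

end

theory Submission
  imports Defs
begin

text \<open>
  Taking real parts turns the complex weak equations into equations for real symmetric forms,
  because test functions may be multiplied by the imaginary unit. The form
  B = Re a + Re (i _, i _)_H is coercive by i-ellipticity, and so is its penalisation
  B + t Re (j _, j _)_K for t = -\<mu> \<ge> 0; every equation is then solved by the Riesz
  representer of a coercive symmetric form, which minimises the energy B(x,x) - 2 L(x).
  This gives R_\<mu> = i S_t Z and R^D = i P Z, where Z f represents v \<mapsto> Re (f, i v)_H,
  P is the B-orthogonal projection onto V_D = ker j, and S_t x solves
  B(u,v) + t Re (j u, j v)_K = B(x,v) for all v.

  For fixed x, S_t x \<rightarrow> P x as t \<rightarrow> \<infinity>: x - P x lies in the closure of the range of the
  representer J of Re (j _, j _)_K, on which the penalty forces |S_t (J s)| = O(t^(-1/2)),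
  and the S_t are uniformly bounded. Compactness of i together with
  |Z h|^2 \<le> C |h| |i (Z h)| makes Z map the unit ball of H onto a totally bounded set, on
  which the equi-Lipschitz family i (S_t - P) therefore converges uniformly to 0; this is the
  convergence in operator norm.
\<close>

lemma quadratic_nonneg_imp_discriminant_le:
  fixes A B C :: real
  assumes nonneg: "\<And>t. 0 \<le> A + 2*t*B + t^2*C" and "C \<ge> 0"
  shows "B^2 \<le> A * C"
proof (cases "C = 0")
  case True
  have "B = 0"
  proof (rule ccontr)
    assume "B \<noteq> 0"
    then have "A + 2 * (-(A+1)/(2*B)) * B + (-(A+1)/(2*B))^2 * C = -1"
      using True by (simp add: field_simps)
    with nonneg show False by (metis neg_0_le_iff_le not_one_le_zero)
  qed
  then show ?thesis using True by simp
next
  case False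
  then have C: "C > 0" using \<open>C \<ge> 0\<close> by simp
  have "0 \<le> A + 2 * (-B/C) * B + (-B/C)^2 * C" by (rule nonneg)
  also have "\<dots> = A - B^2 / C" using C by (simp add: power2_eq_square field_simps)
  finally show ?thesis using C by (simp add: pos_divide_le_eq mult.commute)
qed

lemma quadratic_maximum_bound:
  fixes x y b t :: real
  assumes "x + t * y^2 \<le> b * y" "t > 0"
  shows "x \<le> b^2 / (4 * t)"
proof -
  have "4 * t * x \<le> 4 * t * (b * y - t * y^2)" using assms by simp
  also have "\<dots> = b^2 - (b - 2 * t * y)^2" by (simp add: power2_eq_square algebra_simps)
  also have "\<dots> \<le> b^2" by simp
  finally show ?thesis using assms(2) by (simp add: pos_le_divide_eq mult.commute)
qed

lemma subspace_closure:
  fixes S :: "'a::real_normed_vector set"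
  assumes S: "subspace S"
  shows "subspace (closure S)"
  unfolding subspace_def
proof (intro conjI ballI allI)
  show "0 \<in> closure S" using S closure_subset subspace_0 by blast
next
  fix x y assume "x \<in> closure S" "y \<in> closure S"
  then obtain xs ys where "\<And>n. xs n \<in> S" "xs \<longlonglongrightarrow> x" "\<And>n. ys n \<in> S" "ys \<longlonglongrightarrow> y"
    unfolding closure_sequential by metis
  then show "x + y \<in> closure S" unfolding closure_sequential
    by (intro exI[of _ "\<lambda>n. xs n + ys n"]) (auto intro: tendsto_add subspace_add[OF S])
next
  fix r :: real and x assume "x \<in> closure S"
  then obtain xs where "\<And>n. xs n \<in> S" "xs \<longlonglongrightarrow> x"
    unfolding closure_sequential by metis
  then show "r *\<^sub>R x \<in> closure S" unfolding closure_sequential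
    by (intro exI[of _ "\<lambda>n. r *\<^sub>R xs n"]) (auto intro: tendsto_scaleR subspace_scale[OF S])
qed

lemma bounded_bilinear_add:
  assumes "bounded_bilinear F" "bounded_bilinear G"
  shows "bounded_bilinear (\<lambda>x y. F x y + G x y)"
proof -
  interpret F: bounded_bilinear F by fact
  interpret G: bounded_bilinear G by fact
  obtain KF KG where KF: "\<And>x y. norm (F x y) \<le> norm x * norm y * KF"
    and KG: "\<And>x y. norm (G x y) \<le> norm x * norm y * KG"
    using F.bounded G.bounded by metis
  show ?thesis
  proof
    show "\<exists>K. \<forall>x y. norm (F x y + G x y) \<le> norm x * norm y * K"
    proof (intro exI allI)
      fix x y
      have "norm (F x y + G x y) \<le> norm (F x y) + norm (G x y)" by (rule norm_triangle_ineq)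
      also have "\<dots> \<le> norm x * norm y * (KF + KG)" using KF[of x y] KG[of x y] by (simp add: distrib_left)
      finally show "norm (F x y + G x y) \<le> norm x * norm y * (KF + KG)" .
    qed
  qed (simp_all add: F.add_left F.add_right G.add_left G.add_right
      F.scaleR_left F.scaleR_right G.scaleR_left G.scaleR_right scaleR_add_right)
qed

lemma norm_le_if_unit_ball_le:
  assumes "bounded_linear D" "\<And>x. norm x \<le> 1 \<Longrightarrow> norm (D x) \<le> e"
  shows "norm (D x) \<le> e * norm x"
proof -
  interpret D: bounded_linear D by fact
  show ?thesis
  proof (cases "x = 0")
    case False
    have "norm (D ((1 / norm x) *\<^sub>R x)) \<le> e" using False by (intro assms(2)) simp
    then show ?thesis using False by (simp add: D.scaleR divide_le_eq mult.commute)
  qed (simp add: D.zero)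
qed

lemma finite_net_of_subset_of_compact:
  fixes S :: "'a::metric_space set"
  assumes "compact C" "S \<subseteq> C" "e > 0"
  shows "\<exists>G. finite G \<and> G \<subseteq> S \<and> S \<subseteq> (\<Union>g\<in>G. ball g e)"
proof -
  have "e/2 > 0" using assms(3) by simp
  obtain k where k: "finite k" "k \<subseteq> C" "C \<subseteq> (\<Union>x\<in>k. ball x (e/2))"
    using seq_compact_imp_totally_bounded[OF compact_imp_seq_compact[OF assms(1)], rule_format, OF \<open>e/2 > 0\<close>]
    by (elim exE conjE)
  define k' where "k' = {x\<in>k. \<exists>g\<in>S. dist x g < e/2}"
  have near: "\<forall>x\<in>k'. \<exists>g. g \<in> S \<and> dist x g < e/2" unfolding k'_def by blast
  obtain pick where pick: "\<forall>x\<in>k'. pick x \<in> S \<and> dist x (pick x) < e/2"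
    using bchoice[OF near] by (elim exE)
  have "S \<subseteq> (\<Union>g\<in>pick ` k'. ball g e)"
  proof
    fix s assume "s \<in> S"
    then have "s \<in> (\<Union>x\<in>k. ball x (e/2))" using assms(2) k(3) by (blast intro: rev_subsetD)
    then obtain x where x: "x \<in> k" "dist x s < e/2" by auto
    then have "x \<in> k'" unfolding k'_def using \<open>s \<in> S\<close> by blast
    then have "dist (pick x) s < e" using pick x(2) by (metis dist_commute dist_triangle_half_l)
    then show "s \<in> (\<Union>g\<in>pick ` k'. ball g e)" using \<open>x \<in> k'\<close> by auto
  qed
  moreover have "finite (pick ` k')" using k(1) unfolding k'_def by simp
  moreover have "pick ` k' \<subseteq> S" using pick by blast
  ultimately show ?thesis by blast
qed

lemma eventually_uniformly_small_on_totally_bounded: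
  fixes E :: "'i \<Rightarrow> 'a::real_normed_vector \<Rightarrow> 'b::real_normed_vector"
  assumes lipschitz: "eventually (\<lambda>t. \<forall>x y. norm (E t x - E t y) \<le> C * norm (x - y)) F"
    and pointwise: "\<And>x. x \<in> X \<Longrightarrow> ((\<lambda>t. E t x) \<longlongrightarrow> 0) F"
    and nets: "\<And>\<delta>. \<delta> > 0 \<Longrightarrow> \<exists>G. finite G \<and> G \<subseteq> X \<and> X \<subseteq> (\<Union>g\<in>G. ball g \<delta>)"
    and "C \<ge> 0" "e > 0"
  shows "eventually (\<lambda>t. \<forall>x\<in>X. norm (E t x) < e) F"
proof -
  define \<delta> where "\<delta> = e / (2 * (C + 1))"
  have \<delta>: "\<delta> > 0" "C * \<delta> < e / 2"
    using assms(4,5) unfolding \<delta>_def by (simp_all add: field_simps)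
  obtain G where G: "finite G" "G \<subseteq> X" "X \<subseteq> (\<Union>g\<in>G. ball g \<delta>)" using nets[OF \<delta>(1)] by (elim exE conjE)
  have "\<forall>g\<in>G. eventually (\<lambda>t. norm (E t g) < e / 2) F"
  proof
    fix g assume "g \<in> G"
    show "eventually (\<lambda>t. norm (E t g) < e / 2) F"
      using tendstoD[OF pointwise[OF subsetD[OF G(2) \<open>g \<in> G\<close>]], of "e / 2"] \<open>e > 0\<close> by simp
  qed
  then have "eventually (\<lambda>t. \<forall>g\<in>G. norm (E t g) < e / 2) F"
    by (rule eventually_ball_finite[OF G(1)])
  with lipschitz show ?thesis
  proof eventually_elim
    case (elim t)
    show "\<forall>x\<in>X. norm (E t x) < e"
    proof
      fix x assume "x \<in> X"
      then obtain g where g: "g \<in> G" "dist g x < \<delta>" using G(3) by auto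
      have "norm (E t x) \<le> norm (E t x - E t g) + norm (E t g)" using norm_triangle_sub[of "E t x" "E t g"] by simp
      also have "norm (E t x - E t g) \<le> C * norm (x - g)" using elim(1) by simp
      also have "\<dots> \<le> C * \<delta>"
        using g(2) \<open>C \<ge> 0\<close> by (intro mult_left_mono) (simp_all add: dist_norm norm_minus_commute)
      finally have "norm (E t x) \<le> C * \<delta> + norm (E t g)" by simp
      moreover have "norm (E t g) < e / 2" using elim(2) g(1) by simp
      ultimately show "norm (E t x) < e" using \<delta>(2) by linarith
    qed
  qed
qed

lemma Re_vanishes_imp_vanishes:
  fixes cm :: "complex \<Rightarrow> 'v \<Rightarrow> 'v" and D :: "'v \<Rightarrow> complex"
  assumes "\<And>v. v \<in> W \<Longrightarrow> cm \<i> v \<in> W" and "\<And>v. D (cm \<i> v) = - \<i> * D v"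
    and "\<forall>v\<in>W. Re (D v) = 0"
  shows "\<forall>v\<in>W. D v = 0"
proof
  fix v assume "v \<in> W"
  then have "Re (D (cm \<i> v)) = 0" using assms(1,3) by blast
  then have "Im (D v) = 0" using assms(2)[of v] by simp
  then show "D v = 0" using assms(3) \<open>v \<in> W\<close> by (simp add: complex_eq_iff)
qed

section \<open>Riesz representation for coercive symmetric forms\<close>

locale coercive_form =
  fixes B :: "'a::banach \<Rightarrow> 'a \<Rightarrow> real" and M :: "'a set" and c :: real
  assumes bounded_bilinear: "bounded_bilinear B" and symmetric: "B u v = B v u"
    and subspace: "subspace M" and closed: "closed M" and c_pos: "c > 0"
    and coercive: "u \<in> M \<Longrightarrow> c * (norm u)^2 \<le> B u u"
begin

sublocale B: bounded_bilinear B by (rule bounded_bilinear)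

lemma representer_unique:
  assumes "u \<in> M" "\<forall>v\<in>M. B u v = L v" "u' \<in> M" "\<forall>v\<in>M. B u' v = L v"
  shows "u = u'"
proof -
  have d: "u - u' \<in> M" using assms subspace_diff[OF subspace] by blast
  have "B (u - u') (u - u') = 0" using assms d by (simp add: B.diff_left)
  with coercive[OF d] c_pos have "(norm (u - u'))^2 \<le> 0"
    by (simp add: mult_le_0_iff)
  then show ?thesis by simp
qed

definition energy :: "('a \<Rightarrow> real) \<Rightarrow> 'a \<Rightarrow> real" where
  "energy L x = B x x - 2 * L x"

lemma energy_midpoint:
  assumes "linear L"
  shows "B (x - y) (x - y) = 2 * (energy L x + energy L y) - 4 * energy L ((1/2) *\<^sub>R (x + y))"
  unfolding energy_def
  by (simp add: B.diff_left B.diff_right B.add_left B.add_right B.scaleR_left B.scaleR_right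
      linear_add[OF assms] linear_scale[OF assms] symmetric[of y x] algebra_simps)

lemma energy_bounded_below:
  assumes "bounded_linear L"
  shows "\<exists>m. \<forall>x\<in>M. m \<le> energy L x"
proof -
  obtain K where K: "\<And>x. norm (L x) \<le> norm x * K"
    using bounded_linear.bounded[OF assms(1)] by blast
  have "- (K^2) / c \<le> energy L x" if "x \<in> M" for x
  proof -
    have "c * (c * (norm x)^2) \<le> c * B x x" using coercive[OF that] c_pos by simp
    moreover have "c * L x \<le> c * (norm x * K)" using K[of x] c_pos by (simp add: abs_le_iff)
    moreover have "0 \<le> (c * norm x - K)^2" by simp
    ultimately have "- (K^2) \<le> c * energy L x" unfolding energy_def
      by (simp add: power2_eq_square algebra_simps)
    then show ?thesis using c_pos by (simp add: divide_simps mult.commute)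
  qed
  then show ?thesis by blast
qed

lemma minimizing_sequence_Cauchy:
  assumes L: "linear L" and xs: "\<And>n. xs n \<in> M"
    and m: "\<And>x. x \<in> M \<Longrightarrow> m \<le> energy L x" and xs_m: "\<And>n. energy L (xs n) \<le> m + 1 / Suc n"
  shows "Cauchy xs"
proof (rule CauchyI)
  have dist_xs: "c * (norm (xs n - xs k))^2 \<le> 2 * (1 / Suc n + 1 / Suc k)" for n k
  proof -
    have mid: "(1/2) *\<^sub>R (xs n + xs k) \<in> M"
      using xs subspace_add[OF subspace] subspace_scale[OF subspace] by blast
    have "c * (norm (xs n - xs k))^2 \<le> B (xs n - xs k) (xs n - xs k)"
      using coercive subspace_diff[OF subspace] xs by blast
    also have "\<dots> \<le> 2 * (1 / Suc n + 1 / Suc k)"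
      using energy_midpoint[OF L] xs_m[of n] xs_m[of k] m[OF mid] by simp
    finally show ?thesis .
  qed
  fix e :: real assume e: "e > 0"
  obtain N :: nat where N: "4 / (c * e^2) < N" using reals_Archimedean2 by blast
  have "norm (xs n - xs k) < e" if "n \<ge> N" "k \<ge> N" for n k
  proof -
    have "1 / real (Suc n) \<le> 1 / Suc N" "1 / real (Suc k) \<le> 1 / Suc N"
      using that by (auto simp: divide_simps)
    with dist_xs[of n k] have "c * (norm (xs n - xs k))^2 \<le> 4 / Suc N" by simp
    also have "4 / Suc N < c * e^2"
    proof -
      have "4 < real N * (c * e^2)" using N c_pos e by (simp add: divide_simps mult.commute)
      also have "\<dots> \<le> real (Suc N) * (c * e^2)" using c_pos by (intro mult_right_mono) auto
      finally show ?thesis by (simp add: divide_simps mult.commute)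
    qed
    finally have "(norm (xs n - xs k))^2 < e^2" using c_pos by simp
    then show ?thesis using e by (simp add: power_less_imp_less_base)
  qed
  then show "\<exists>N. \<forall>n\<ge>N. \<forall>k\<ge>N. norm (xs n - xs k) < e" by blast
qed

lemma energy_minimizer_exists:
  assumes L: "bounded_linear L"
  shows "\<exists>u\<in>M. \<forall>x\<in>M. energy L u \<le> energy L x"
proof -
  interpret L: bounded_linear L by (rule L)
  define m where "m = Inf (energy L ` M)"
  obtain lb where "\<forall>x\<in>M. lb \<le> energy L x" using energy_bounded_below[OF L] by (elim exE)
  then have bdd: "bdd_below (energy L ` M)" by (auto intro!: bdd_belowI)
  have ne: "energy L ` M \<noteq> {}" using subspace_0[OF subspace] by auto
  have m: "m \<le> energy L x" if "x \<in> M" for x unfolding m_def using bdd that by (auto intro: cInf_lower)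
  have "\<exists>x\<in>M. energy L x < m + 1 / Suc n" for n
    using cInf_lessD[OF ne, of "m + 1 / Suc n"] unfolding m_def by auto
  then obtain xs where xs: "\<And>n. xs n \<in> M" "\<And>n. energy L (xs n) < m + 1 / Suc n" by metis
  have "Cauchy xs"
    by (rule minimizing_sequence_Cauchy[OF L.linear xs(1), of m]) (fact m, rule less_imp_le[OF xs(2)])
  then obtain u where u: "xs \<longlonglongrightarrow> u" by (auto simp: Cauchy_convergent_iff convergent_def)
  have "u \<in> M" by (rule closed_sequentially[OF closed _ u]) (simp add: xs(1))
  moreover have "energy L u \<le> m"
  proof (rule LIMSEQ_le)
    show "(\<lambda>n. energy L (xs n)) \<longlonglongrightarrow> energy L u" unfolding energy_def
      by (intro tendsto_intros B.tendsto L.tendsto u)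
    have "(\<lambda>n. 1 / real (Suc n)) \<longlonglongrightarrow> 0"
      using LIMSEQ_inverse_real_of_nat by (simp add: inverse_eq_divide)
    then show "(\<lambda>n. m + 1 / real (Suc n)) \<longlonglongrightarrow> m" using tendsto_add[of "\<lambda>n. m" m] by fastforce
    show "\<exists>N. \<forall>n\<ge>N. energy L (xs n) \<le> m + 1 / real (Suc n)"
      by (intro exI[of _ 0] allI impI less_imp_le xs(2))
  qed
  ultimately show ?thesis using m by (intro bexI[of _ u] ballI) (auto intro: order_trans)
qed

lemma minimizer_represents:
  assumes L: "linear L" and u: "u \<in> M" "\<And>x. x \<in> M \<Longrightarrow> energy L u \<le> energy L x" and v: "v \<in> M"
  shows "B u v = L v"
proof -
  have "0 \<le> 0 + 2*t*(B u v - L v) + t^2 * B v v" for t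
  proof -
    have "u + t *\<^sub>R v \<in> M" using u v subspace_add[OF subspace] subspace_scale[OF subspace] by blast
    then have "energy L u \<le> energy L (u + t *\<^sub>R v)" using u by simp
    moreover have "energy L (u + t *\<^sub>R v) = energy L u + 2*t*(B u v - L v) + t^2 * B v v"
      unfolding energy_def by (simp add: B.add_left B.add_right B.scaleR_left B.scaleR_right
          linear_add[OF L] linear_scale[OF L] symmetric[of v u] algebra_simps power2_eq_square)
    ultimately show ?thesis by simp
  qed
  moreover have "0 \<le> B v v" using coercive[OF v] c_pos by (smt (verit) mult_nonneg_nonneg zero_le_power2)
  ultimately have "(B u v - L v)^2 \<le> 0 * B v v" by (rule quadratic_nonneg_imp_discriminant_le)
  then show ?thesis by simp
qed

definition representer :: "('a \<Rightarrow> real) \<Rightarrow> 'a" where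
  "representer L = (THE u. u \<in> M \<and> (\<forall>v\<in>M. B u v = L v))"

lemma representer:
  assumes "bounded_linear L"
  shows representer_in: "representer L \<in> M"
    and representer_eq: "v \<in> M \<Longrightarrow> B (representer L) v = L v"
proof -
  obtain u where u: "u \<in> M" "\<forall>x\<in>M. energy L u \<le> energy L x"
    using energy_minimizer_exists[OF assms] by (elim bexE)
  have rep: "\<forall>v\<in>M. B u v = L v"
    using minimizer_represents[OF bounded_linear.linear[OF assms] u(1)] u(2) by simp
  have "\<exists>!u. u \<in> M \<and> (\<forall>v\<in>M. B u v = L v)"
  proof (rule ex1I)
    show "u \<in> M \<and> (\<forall>v\<in>M. B u v = L v)" using u(1) rep by simp
    fix u' assume "u' \<in> M \<and> (\<forall>v\<in>M. B u' v = L v)"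
    then show "u' = u" using representer_unique[of u' L u] u(1) rep by simp
  qed
  then have "representer L \<in> M \<and> (\<forall>v\<in>M. B (representer L) v = L v)"
    unfolding representer_def by (rule theI')
  then show "representer L \<in> M" "v \<in> M \<Longrightarrow> B (representer L) v = L v" by simp_all
qed

lemma representer_eqI:
  assumes "bounded_linear L" "u \<in> M" "\<And>v. v \<in> M \<Longrightarrow> B u v = L v"
  shows "representer L = u"
  using representer_unique[of "representer L" L u] representer[OF assms(1)] assms by auto

lemma norm_representer_le:
  assumes "bounded_linear L" "\<And>v. v \<in> M \<Longrightarrow> \<bar>L v\<bar> \<le> K * norm v" "K \<ge> 0"
  shows "norm (representer L) \<le> K / c"
proof -
  let ?u = "representer L"
  have "c * (norm ?u)^2 \<le> B ?u ?u" using coercive representer_in[OF assms(1)] by blast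
  also have "\<dots> = L ?u" using representer[OF assms(1)] by blast
  also have "\<dots> \<le> K * norm ?u" using assms(2)[OF representer_in[OF assms(1)]] by simp
  finally have "c * norm ?u * norm ?u \<le> K * norm ?u" by (simp add: power2_eq_square)
  then have "c * norm ?u \<le> K" using assms(3) by (cases "norm ?u = 0") auto
  then show ?thesis using c_pos by (simp add: field_simps mult.commute)
qed

lemma bounded_linear_representer:
  assumes F: "bounded_bilinear F"
  shows "bounded_linear (\<lambda>x. representer (F x))"
proof -
  interpret F: bounded_bilinear F by (rule F)
  obtain K where K: "K > 0" "\<And>x v. norm (F x v) \<le> norm x * norm v * K" using F.pos_bounded by blast
  show ?thesis
  proof (rule bounded_linear_intro)
    fix x y :: 'b and r :: real
    show "representer (F (x + y)) = representer (F x) + representer (F y)"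
      using representer[OF F.bounded_linear_right]
      by (intro representer_eqI F.bounded_linear_right subspace_add[OF subspace])
         (simp_all add: B.add_left F.add_left)
    show "representer (F (r *\<^sub>R x)) = r *\<^sub>R representer (F x)"
      using representer[OF F.bounded_linear_right]
      by (intro representer_eqI F.bounded_linear_right subspace_scale[OF subspace])
         (simp_all add: B.scaleR_left F.scaleR_left)
    have "norm (representer (F x)) \<le> norm x * K / c"
      using K by (intro norm_representer_le F.bounded_linear_right) (simp_all add: mult.commute mult.left_commute)
    then show "norm (representer (F x)) \<le> norm x * (K / c)" by simp
  qed
qed

end

section \<open>Real parts of complex inner products\<close>

locale complex_hilbert_space =
  fixes cm :: "complex \<Rightarrow> 'a::banach \<Rightarrow> 'a" and ip :: "'a \<Rightarrow> 'a \<Rightarrow> complex"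
  assumes complex_hilbert: "complex_hilbert cm ip"
begin

lemma cm_of_real: "cm (complex_of_real r) x = r *\<^sub>R x"
  and cm_add: "cm c (x + y) = cm c x + cm c y"
  and ip_add_left: "ip (x + y) z = ip x z + ip y z"
  and ip_cm_left: "ip (cm c x) y = c * ip x y"
  and ip_commute: "ip y x = cnj (ip x y)"
  and norm_sq_ip: "(norm x)\<^sup>2 = Re (ip x x)"
  using complex_hilbert unfolding complex_hilbert_def by blast+

lemma ip_add_right: "ip x (y + z) = ip x y + ip x z"
  by (metis ip_add_left ip_commute complex_cnj_add)

lemma ip_cm_right: "ip x (cm c y) = cnj c * ip x y"
  by (metis ip_cm_left ip_commute complex_cnj_mult complex_cnj_cnj)

lemma cm_zero: "cm c 0 = 0"
  using cm_add[of c 0 0] by simp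

definition rip :: "'a \<Rightarrow> 'a \<Rightarrow> real" where
  "rip x y = Re (ip x y)"

lemma rip_commute: "rip x y = rip y x"
  unfolding rip_def by (metis ip_commute complex_cnj_cnj cnj.simps(1))

lemma rip_self: "rip x x = (norm x)^2"
  unfolding rip_def by (simp add: norm_sq_ip)

lemma rip_add_left: "rip (x + x') y = rip x y + rip x' y"
  unfolding rip_def by (simp add: ip_add_left)

lemma rip_add_right: "rip x (y + y') = rip x y + rip x y'"
  unfolding rip_def by (simp add: ip_add_right)

lemma rip_scaleR_left: "rip (r *\<^sub>R x) y = r * rip x y"
  unfolding rip_def using ip_cm_left[of "complex_of_real r" x y] by (simp add: cm_of_real)

lemma rip_scaleR_right: "rip x (r *\<^sub>R y) = r * rip x y"
  unfolding rip_def using ip_cm_right[of x "complex_of_real r" y] by (simp add: cm_of_real)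

lemma abs_rip_le: "\<bar>rip x y\<bar> \<le> norm x * norm y"
proof -
  have "0 \<le> (norm x)^2 + 2*t*rip x y + t^2*(norm y)^2" for t
  proof -
    have "0 \<le> rip (x + t *\<^sub>R y) (x + t *\<^sub>R y)" by (simp add: rip_self)
    also have "\<dots> = (norm x)^2 + 2*t*rip x y + t^2*(norm y)^2"
      unfolding rip_add_left rip_add_right rip_scaleR_left rip_scaleR_right
      by (simp add: rip_self rip_commute[of y x] power2_eq_square algebra_simps)
    finally show ?thesis .
  qed
  then have "(rip x y)^2 \<le> (norm x * norm y)^2"
    by (simp add: power_mult_distrib quadratic_nonneg_imp_discriminant_le)
  then have "\<bar>rip x y\<bar> \<le> \<bar>norm x * norm y\<bar>" by (simp only: abs_le_square_iff)
  then show ?thesis by simp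
qed

lemma bounded_bilinear_rip: "bounded_bilinear rip"
proof
  show "\<exists>K. \<forall>a b. norm (rip a b) \<le> norm a * norm b * K"
    using abs_rip_le by (intro exI[of _ 1]) simp
qed (simp_all add: rip_add_left rip_add_right rip_scaleR_left rip_scaleR_right)

end

section \<open>Penalty approximation of the Dirichlet resolvent\<close>

locale penalty_setting =
  V: complex_hilbert_space cmV ipV + H: complex_hilbert_space cmH ipH + K: complex_hilbert_space cmK ipK
  for cmV :: "complex \<Rightarrow> 'v::banach \<Rightarrow> 'v" and ipV
    and cmH :: "complex \<Rightarrow> 'h::banach \<Rightarrow> 'h" and ipH
    and cmK :: "complex \<Rightarrow> 'k::banach \<Rightarrow> 'k" and ipK +
  fixes i :: "'v \<Rightarrow> 'h" and j :: "'v \<Rightarrow> 'k" and a :: "'v \<Rightarrow> 'v \<Rightarrow> complex"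
  assumes i_compact: "compact_op cmV cmH i"
    and j_cbounded: "cbounded_linear cmV cmK j"
    and a_form: "sesquilinear_cont cmV a"
    and a_nonneg: "\<And>u. Re (a u u) \<ge> 0"
    and a_sym: "\<And>u v. a v u = cnj (a u v)"
    and a_elliptic: "\<exists>\<omega>>0. \<exists>\<delta>>0. \<forall>u. Re (a u u) + \<omega> * (norm (i u))\<^sup>2 \<ge> \<delta> * (norm u)\<^sup>2"
begin

lemma i_cbounded: "cbounded_linear cmV cmH i"
  using i_compact unfolding compact_op_def by blast

sublocale i: bounded_linear i
  using i_cbounded unfolding cbounded_linear_def by blast

sublocale j: bounded_linear j
  using j_cbounded unfolding cbounded_linear_def by blast

lemma i_cm: "i (cmV c x) = cmH c (i x)"
  using i_cbounded unfolding cbounded_linear_def by blast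

lemma j_cm: "j (cmV c x) = cmK c (j x)"
  using j_cbounded unfolding cbounded_linear_def by blast

lemma a_add_left: "a (u + u') v = a u v + a u' v"
  and a_cm_left: "a (cmV c u) v = c * a u v"
  and a_add_right: "a u (v + v') = a u v + a u v'"
  and a_cm_right: "a u (cmV c v) = cnj c * a u v"
  and a_bounded: "\<exists>M. \<forall>u v. cmod (a u v) \<le> M * norm u * norm v"
  using a_form unfolding sesquilinear_cont_def by blast+

lemma bounded_bilinear_Re_a: "bounded_bilinear (\<lambda>u v. Re (a u v))"
proof
  obtain M where M: "\<And>u v. cmod (a u v) \<le> M * norm u * norm v" using a_bounded by blast
  show "\<exists>K. \<forall>u v. norm (Re (a u v)) \<le> norm u * norm v * K"
  proof (intro exI allI)
    fix u v
    have "norm (Re (a u v)) \<le> cmod (a u v)" by (simp add: abs_Re_le_cmod)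
    also have "\<dots> \<le> norm u * norm v * M" using M[of u v] by (simp add: mult.commute mult.left_commute)
    finally show "norm (Re (a u v)) \<le> norm u * norm v * M" .
  qed
next
  fix r :: real and u v :: 'v
  show "Re (a (r *\<^sub>R u) v) = r *\<^sub>R Re (a u v)"
    using a_cm_left[of "complex_of_real r" u v] by (simp add: V.cm_of_real)
  show "Re (a u (r *\<^sub>R v)) = r *\<^sub>R Re (a u v)"
    using a_cm_right[of u "complex_of_real r" v] by (simp add: V.cm_of_real)
qed (simp_all add: a_add_left a_add_right)

definition B :: "'v \<Rightarrow> 'v \<Rightarrow> real" where
  "B u v = Re (a u v) + H.rip (i u) (i v)"

definition Bpen :: "real \<Rightarrow> 'v \<Rightarrow> 'v \<Rightarrow> real" where
  "Bpen t u v = B u v + t * K.rip (j u) (j v)"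

definition VD :: "'v set" where
  "VD = {v. j v = 0}"

lemma bounded_bilinear_B: "bounded_bilinear B"
  unfolding B_def[abs_def]
  by (intro bounded_bilinear_add bounded_bilinear_Re_a
      bounded_bilinear.comp[OF H.bounded_bilinear_rip i.bounded_linear i.bounded_linear])

lemma bounded_bilinear_Bpen: "bounded_bilinear (Bpen t)"
proof -
  have "bounded_bilinear (\<lambda>u v. K.rip (j u) (t *\<^sub>R j v))"
    by (intro bounded_bilinear.comp[OF K.bounded_bilinear_rip j.bounded_linear]
        bounded_linear_compose[OF bounded_linear_scaleR_right j.bounded_linear])
  then show ?thesis
    unfolding Bpen_def[abs_def] using bounded_bilinear_add[OF bounded_bilinear_B]
    by (simp add: K.rip_scaleR_right)
qed

lemma B_commute: "B u v = B v u"
  unfolding B_def by (simp add: a_sym[of u v] H.rip_commute)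

lemma Bpen_commute: "Bpen t u v = Bpen t v u"
  unfolding Bpen_def by (simp add: B_commute K.rip_commute)

definition coerc :: real where
  "coerc = (SOME c. c > 0 \<and> (\<forall>u. c * (norm u)^2 \<le> B u u))"

lemma B_coercive_exists: "\<exists>c. c > 0 \<and> (\<forall>u. c * (norm u)^2 \<le> B u u)"
proof -
  obtain \<omega> \<delta> where \<omega>\<delta>: "\<omega> > 0" "\<delta> > 0" "\<And>u. Re (a u u) + \<omega> * (norm (i u))\<^sup>2 \<ge> \<delta> * (norm u)\<^sup>2"
    using a_elliptic by blast
  define m where "m = max 1 \<omega>"
  show ?thesis
  proof (intro exI conjI allI)
    show "\<delta> / m > 0" using \<omega>\<delta> unfolding m_def by simp
    fix u
    have m: "1 \<le> m" "\<omega> \<le> m" unfolding m_def by simp_all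
    have "Re (a u u) \<le> m * Re (a u u)" using mult_right_mono[OF m(1) a_nonneg[of u]] by simp
    moreover have "\<omega> * (norm (i u))\<^sup>2 \<le> m * (norm (i u))\<^sup>2" using m(2) by (simp add: mult_right_mono)
    ultimately have "\<delta> * (norm u)\<^sup>2 \<le> m * B u u"
      using \<omega>\<delta>(3)[of u] unfolding B_def H.rip_self by (simp add: algebra_simps)
    then show "\<delta> / m * (norm u)\<^sup>2 \<le> B u u" unfolding m_def by (simp add: field_simps)
  qed
qed

lemma coerc_pos: "coerc > 0"
  and B_coercive: "coerc * (norm u)^2 \<le> B u u"
  using someI_ex[OF B_coercive_exists] unfolding coerc_def by auto

lemma Bpen_coercive: "t \<ge> 0 \<Longrightarrow> coerc * (norm u)^2 \<le> Bpen t u u"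
  using B_coercive[of u] unfolding Bpen_def K.rip_self by (simp add: add_increasing2)

lemma subspace_VD: "subspace VD"
  unfolding VD_def subspace_def by (simp add: j.zero j.add j.scaleR)

lemma closed_VD: "closed VD"
  unfolding VD_def by (rule closed_Collect_eq) (simp_all add: linear_continuous_on j.bounded_linear)

lemma VD_cm: "v \<in> VD \<Longrightarrow> cmV c v \<in> VD"
  unfolding VD_def by (simp add: j_cm K.cm_zero)

lemma coercive_form_Bpen: "t \<ge> 0 \<Longrightarrow> coercive_form (Bpen t) UNIV coerc"
  by (rule coercive_form.intro) (simp_all add: bounded_bilinear_Bpen Bpen_commute Bpen_coercive coerc_pos)

sublocale BV: coercive_form B UNIV coerc
  by (rule coercive_form.intro) (simp_all add: bounded_bilinear_B B_commute B_coercive coerc_pos)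

sublocale BD: coercive_form B VD coerc
  by (rule coercive_form.intro) (simp_all add: bounded_bilinear_B B_commute B_coercive coerc_pos subspace_VD closed_VD)

definition Z :: "'h \<Rightarrow> 'v" where
  "Z f = BV.representer (\<lambda>v. H.rip f (i v))"

definition J :: "'v \<Rightarrow> 'v" where
  "J s = BV.representer (\<lambda>v. K.rip (j s) (j v))"

definition S :: "real \<Rightarrow> 'v \<Rightarrow> 'v" where
  "S t x = coercive_form.representer (Bpen t) UNIV (B x)"

definition P :: "'v \<Rightarrow> 'v" where
  "P x = BD.representer (B x)"

lemma bounded_bilinear_H_rhs: "bounded_bilinear (\<lambda>f v. H.rip f (i v))"
  by (rule bounded_bilinear.comp[OF H.bounded_bilinear_rip bounded_linear_ident i.bounded_linear])

lemma bounded_bilinear_K_rhs: "bounded_bilinear (\<lambda>s v. K.rip (j s) (j v))"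
  by (rule bounded_bilinear.comp[OF K.bounded_bilinear_rip j.bounded_linear j.bounded_linear])

lemma B_Z: "B (Z f) v = H.rip f (i v)"
  unfolding Z_def by (simp add: BV.representer_eq bounded_bilinear.bounded_linear_right[OF bounded_bilinear_H_rhs])

lemma B_J: "B (J s) v = K.rip (j s) (j v)"
  unfolding J_def by (simp add: BV.representer_eq bounded_bilinear.bounded_linear_right[OF bounded_bilinear_K_rhs])

lemma Bpen_S: "t \<ge> 0 \<Longrightarrow> Bpen t (S t x) v = B x v"
  unfolding S_def by (simp add: coercive_form.representer_eq[OF coercive_form_Bpen] BV.B.bounded_linear_right)

lemma P_in_VD: "P x \<in> VD"
  unfolding P_def by (simp add: BD.representer_in BV.B.bounded_linear_right)

lemma B_P: "v \<in> VD \<Longrightarrow> B (P x) v = B x v"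
  unfolding P_def by (simp add: BD.representer_eq BV.B.bounded_linear_right)

lemma bounded_linear_Z: "bounded_linear Z"
  unfolding Z_def[abs_def] by (rule BV.bounded_linear_representer[OF bounded_bilinear_H_rhs])

lemma bounded_linear_J: "bounded_linear J"
  unfolding J_def[abs_def] by (rule BV.bounded_linear_representer[OF bounded_bilinear_K_rhs])

lemma bounded_linear_S: "t \<ge> 0 \<Longrightarrow> bounded_linear (S t)"
  unfolding S_def[abs_def]
  by (rule coercive_form.bounded_linear_representer[OF coercive_form_Bpen bounded_bilinear_B])

lemma bounded_linear_P: "bounded_linear P"
  unfolding P_def[abs_def] by (rule BD.bounded_linear_representer[OF bounded_bilinear_B])

definition MB :: real where
  "MB = (SOME K. K > 0 \<and> (\<forall>x y. norm (B x y) \<le> norm x * norm y * K))"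

lemma MB_spec: "MB > 0 \<and> (\<forall>x y. norm (B x y) \<le> norm x * norm y * MB)"
  unfolding MB_def by (rule someI_ex[OF BV.B.pos_bounded])

lemma MB_pos: "MB > 0" and abs_B_le: "\<bar>B x y\<bar> \<le> MB * norm x * norm y"
  using MB_spec by (auto simp: mult.commute mult.left_commute)

lemma norm_S_le:
  assumes "t \<ge> 0" shows "norm (S t x) \<le> MB / coerc * norm x"
proof -
  have "norm (S t x) \<le> MB * norm x / coerc"
    unfolding S_def using abs_B_le MB_pos
    by (intro coercive_form.norm_representer_le[OF coercive_form_Bpen[OF assms]] BV.B.bounded_linear_right)
      simp_all
  then show ?thesis by simp
qed

lemma norm_P_le: "norm (P x) \<le> MB / coerc * norm x"
proof -
  have "norm (P x) \<le> MB * norm x / coerc"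
    unfolding P_def using abs_B_le MB_pos
    by (intro BD.norm_representer_le BV.B.bounded_linear_right) simp_all
  then show ?thesis by simp
qed

definition penalized_solution :: "real \<Rightarrow> 'h \<Rightarrow> 'v \<Rightarrow> bool" where
  "penalized_solution \<mu> f u \<longleftrightarrow>
     (\<forall>v. a u v - complex_of_real \<mu> * ipK (j u) (j v) + ipH (i u) (i v) = ipH f (i v))"

definition dirichlet_solution :: "'h \<Rightarrow> 'v \<Rightarrow> bool" where
  "dirichlet_solution f u \<longleftrightarrow> j u = 0 \<and> (\<forall>v. j v = 0 \<longrightarrow> a u v + ipH (i u) (i v) = ipH f (i v))"

lemma a_cm_i: "a u (cmV \<i> v) = - \<i> * a u v"
  by (simp add: a_cm_right)

lemma ipH_i_cm_i: "ipH x (i (cmV \<i> v)) = - \<i> * ipH x (i v)"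
  by (simp add: i_cm H.ip_cm_right)

lemma ipK_j_cm_i: "ipK x (j (cmV \<i> v)) = - \<i> * ipK x (j v)"
  by (simp add: j_cm K.ip_cm_right)

lemma penalized_solution_iff: "penalized_solution \<mu> f u \<longleftrightarrow> (\<forall>v. Bpen (-\<mu>) u v = H.rip f (i v))"
proof -
  define D where "D v = a u v - complex_of_real \<mu> * ipK (j u) (j v) + ipH (i u) (i v) - ipH f (i v)" for v
  have cmD: "D (cmV \<i> v) = - \<i> * D v" for v
    unfolding D_def a_cm_i ipH_i_cm_i ipK_j_cm_i by (simp add: right_diff_distrib distrib_left)
  have ReD: "Re (D v) = Bpen (-\<mu>) u v - H.rip f (i v)" for v
    unfolding D_def Bpen_def B_def H.rip_def K.rip_def by simp
  have "penalized_solution \<mu> f u \<longleftrightarrow> (\<forall>v\<in>UNIV. D v = 0)"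
    unfolding penalized_solution_def D_def by simp
  also have "\<dots> \<longleftrightarrow> (\<forall>v\<in>UNIV. Re (D v) = 0)"
    using Re_vanishes_imp_vanishes[of UNIV cmV D, OF UNIV_I cmD] by auto
  also have "\<dots> \<longleftrightarrow> (\<forall>v. Bpen (-\<mu>) u v = H.rip f (i v))"
    by (simp only: ReD ball_UNIV right_minus_eq)
  finally show ?thesis .
qed

lemma dirichlet_solution_iff: "dirichlet_solution f u \<longleftrightarrow> u \<in> VD \<and> (\<forall>v\<in>VD. B u v = H.rip f (i v))"
proof -
  define D where "D v = a u v + ipH (i u) (i v) - ipH f (i v)" for v
  have cmD: "D (cmV \<i> v) = - \<i> * D v" for v
    unfolding D_def a_cm_i ipH_i_cm_i by (simp add: right_diff_distrib distrib_left)
  have ReD: "Re (D v) = B u v - H.rip f (i v)" for v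
    unfolding D_def B_def H.rip_def by simp
  have "dirichlet_solution f u \<longleftrightarrow> u \<in> VD \<and> (\<forall>v\<in>VD. D v = 0)"
    unfolding dirichlet_solution_def D_def VD_def by simp
  also have "\<dots> \<longleftrightarrow> u \<in> VD \<and> (\<forall>v\<in>VD. Re (D v) = 0)"
    using Re_vanishes_imp_vanishes[of VD cmV D, OF VD_cm cmD] by auto
  also have "\<dots> \<longleftrightarrow> u \<in> VD \<and> (\<forall>v\<in>VD. B u v = H.rip f (i v))"
    by (simp only: ReD right_minus_eq)
  finally show ?thesis .
qed

lemma penalized_solution_iff_S:
  assumes "\<mu> \<le> 0" shows "penalized_solution \<mu> f u \<longleftrightarrow> u = S (-\<mu>) (Z f)"
proof -
  have t: "-\<mu> \<ge> 0" using assms by simp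
  have "(\<forall>v. Bpen (-\<mu>) u v = B (Z f) v) \<longleftrightarrow> u = S (-\<mu>) (Z f)"
  proof
    assume "\<forall>v. Bpen (-\<mu>) u v = B (Z f) v"
    then have "S (-\<mu>) (Z f) = u" unfolding S_def
      by (intro coercive_form.representer_eqI[OF coercive_form_Bpen[OF t] BV.B.bounded_linear_right]) simp_all
    then show "u = S (-\<mu>) (Z f)" by simp
  qed (simp add: Bpen_S[OF t])
  then show ?thesis by (simp add: penalized_solution_iff B_Z)
qed

lemma dirichlet_solution_iff_P: "dirichlet_solution f u \<longleftrightarrow> u = P (Z f)"
proof -
  have "(u \<in> VD \<and> (\<forall>v\<in>VD. B u v = B (Z f) v)) \<longleftrightarrow> u = P (Z f)"
  proof
    assume "u \<in> VD \<and> (\<forall>v\<in>VD. B u v = B (Z f) v)"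
    then have "P (Z f) = u" unfolding P_def
      by (intro BD.representer_eqI[OF BV.B.bounded_linear_right]) simp_all
    then show "u = P (Z f)" by simp
  qed (simp add: B_P P_in_VD)
  then show ?thesis by (simp add: dirichlet_solution_iff B_Z)
qed

lemma penalized_solution_cm:
  assumes "penalized_solution \<mu> f u" shows "penalized_solution \<mu> (cmH c f) (cmV c u)"
  unfolding penalized_solution_def
proof
  fix v
  have "a (cmV c u) v - complex_of_real \<mu> * ipK (j (cmV c u)) (j v) + ipH (i (cmV c u)) (i v)
      = c * a u v - complex_of_real \<mu> * (c * ipK (j u) (j v)) + c * ipH (i u) (i v)"
    by (simp only: a_cm_left i_cm j_cm H.ip_cm_left K.ip_cm_left)
  also have "\<dots> = c * (a u v - complex_of_real \<mu> * ipK (j u) (j v) + ipH (i u) (i v))"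
    by (simp add: right_diff_distrib distrib_left mult.left_commute)
  also have "\<dots> = ipH (cmH c f) (i v)"
    using assms unfolding penalized_solution_def by (simp only: H.ip_cm_left)
  finally show "a (cmV c u) v - complex_of_real \<mu> * ipK (j (cmV c u)) (j v) + ipH (i (cmV c u)) (i v)
      = ipH (cmH c f) (i v)" .
qed

lemma dirichlet_solution_cm:
  assumes "dirichlet_solution f u" shows "dirichlet_solution (cmH c f) (cmV c u)"
  unfolding dirichlet_solution_def
proof (intro conjI allI impI)
  show "j (cmV c u) = 0" using assms unfolding dirichlet_solution_def by (simp add: j_cm K.cm_zero)
  fix v assume "j v = 0"
  have "a (cmV c u) v + ipH (i (cmV c u)) (i v) = c * (a u v + ipH (i u) (i v))"
    by (simp only: a_cm_left i_cm H.ip_cm_left distrib_left)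
  also have "\<dots> = ipH (cmH c f) (i v)"
    using assms \<open>j v = 0\<close> unfolding dirichlet_solution_def by (simp only: H.ip_cm_left)
  finally show "a (cmV c u) v + ipH (i (cmV c u)) (i v) = ipH (cmH c f) (i v)" .
qed

lemma R_mu_eq: "\<mu> \<le> 0 \<Longrightarrow> R_mu a ipH ipK i j \<mu> f = i (S (-\<mu>) (Z f))"
  unfolding R_mu_def penalized_solution_def[symmetric] by (simp add: penalized_solution_iff_S)

lemma R_D_eq: "R_D a ipH i j f = i (P (Z f))"
  unfolding R_D_def dirichlet_solution_def[symmetric] by (simp add: dirichlet_solution_iff_P)

lemma cbounded_linear_R_mu:
  assumes "\<mu> \<le> 0" shows "cbounded_linear cmH cmH (R_mu a ipH ipK i j \<mu>)"
  unfolding cbounded_linear_def R_mu_eq[OF assms, abs_def]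
proof
  show "bounded_linear (\<lambda>f. i (S (-\<mu>) (Z f)))" using assms
    by (intro bounded_linear_compose[OF i.bounded_linear] bounded_linear_compose[OF bounded_linear_S]
        bounded_linear_Z) simp
  have "S (-\<mu>) (Z (cmH c f)) = cmV c (S (-\<mu>) (Z f))" for c f
    using penalized_solution_cm[of \<mu> f "S (-\<mu>) (Z f)" c] by (simp add: penalized_solution_iff_S[OF assms])
  then show "\<forall>c f. i (S (-\<mu>) (Z (cmH c f))) = cmH c (i (S (-\<mu>) (Z f)))" by (simp add: i_cm)
qed

lemma cbounded_linear_R_D: "cbounded_linear cmH cmH (R_D a ipH i j)"
  unfolding cbounded_linear_def R_D_eq[abs_def]
proof
  show "bounded_linear (\<lambda>f. i (P (Z f)))"
    by (intro bounded_linear_compose[OF i.bounded_linear] bounded_linear_compose[OF bounded_linear_P]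
        bounded_linear_Z)
  have "P (Z (cmH c f)) = cmV c (P (Z f))" for c f
    using dirichlet_solution_cm[of f "P (Z f)" c] by (simp add: dirichlet_solution_iff_P)
  then show "\<forall>c f. i (P (Z (cmH c f))) = cmH c (i (P (Z f)))" by (simp add: i_cm)
qed

lemma S_P: "t \<ge> 0 \<Longrightarrow> S t (P x) = P x"
  unfolding S_def[of t "P x"]
  by (rule coercive_form.representer_eqI[OF coercive_form_Bpen BV.B.bounded_linear_right])
     (use P_in_VD in \<open>simp_all add: Bpen_def VD_def K.bounded_bilinear_rip bounded_bilinear.zero_left\<close>)

lemma J_range_dense_in_complement:
  assumes y: "\<forall>v\<in>VD. B y v = 0"
  shows "y \<in> closure (range J)"
proof -
  let ?W = "closure (range J)"
  interpret BW: coercive_form B ?W coerc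
    by (rule coercive_form.intro)
       (simp_all add: bounded_bilinear_B B_commute B_coercive coerc_pos subspace_closure
         linear_subspace_image bounded_linear.linear[OF bounded_linear_J])
  define Q where "Q = BW.representer (B y)"
  have Q: "Q \<in> ?W" "\<And>w. w \<in> ?W \<Longrightarrow> B Q w = B y w"
    unfolding Q_def by (simp_all add: BW.representer_in BW.representer_eq BV.B.bounded_linear_right)
  (* r is B-orthogonal to every J s, hence j r = 0, hence r is B-orthogonal to itself. *)
  define r where "r = y - Q"
  have r_perp_W: "B w r = 0" if "w \<in> ?W" for w
    using Q(2)[OF that] unfolding r_def by (simp add: BV.B.diff_right B_commute[of w])
  have "r \<in> VD"
  proof -
    have "(norm (j r))^2 = B (J r) r" by (simp add: B_J K.rip_self)
    also have "\<dots> = 0" by (rule r_perp_W) (simp add: closure_subset[THEN subsetD])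
    finally show ?thesis unfolding VD_def by simp
  qed
  have "range J \<subseteq> {w. B w r = 0}"
    using \<open>r \<in> VD\<close> unfolding VD_def by (auto simp: B_J K.bounded_bilinear_rip bounded_bilinear.zero_right)
  then have "?W \<subseteq> {w. B w r = 0}"
    by (rule closure_minimal)
       (simp add: closed_Collect_eq linear_continuous_on BV.B.bounded_linear_left)
  then have "B r r = 0"
    using y \<open>r \<in> VD\<close> Q(1) unfolding r_def by (auto simp: BV.B.diff_left)
  then have "r = 0" using B_coercive[of r] coerc_pos by (simp add: mult_le_0_iff)
  then show ?thesis using Q(1) unfolding r_def by simp
qed

lemma norm_S_J_le:
  assumes "t > 0" shows "coerc * (norm (S t (J s)))^2 \<le> (norm (j s))^2 / (4 * t)"
proof -
  let ?u = "S t (J s)"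
  have "B ?u ?u + t * (norm (j ?u))^2 = K.rip (j s) (j ?u)"
    using Bpen_S[of t "J s" ?u] assms by (simp add: Bpen_def B_J K.rip_self)
  also have "\<dots> \<le> norm (j s) * norm (j ?u)" using K.abs_rip_le by (rule abs_le_D1)
  finally have "B ?u ?u \<le> (norm (j s))^2 / (4 * t)" using assms by (rule quadratic_maximum_bound)
  then show ?thesis using B_coercive[of ?u] by simp
qed

lemma S_J_tendsto_0: "((\<lambda>t. S t (J s)) \<longlongrightarrow> 0) at_top"
proof (rule Lim_null_comparison)
  define C where "C = (norm (j s))^2 / (4 * coerc)"
  show "\<forall>\<^sub>F t in at_top. norm (S t (J s)) \<le> sqrt (C / t)"
    using eventually_gt_at_top[of 0]
  proof eventually_elim
    case (elim t)
    then have "(norm (S t (J s)))^2 \<le> C / t"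
      using norm_S_J_le[OF elim] coerc_pos unfolding C_def by (simp add: field_simps)
    then show ?case by (simp add: real_le_rsqrt)
  qed
  show "((\<lambda>t. sqrt (C / t)) \<longlongrightarrow> 0) at_top"
    using tendsto_real_sqrt[OF tendsto_divide_0[OF tendsto_const filterlim_at_top_imp_at_infinity[OF filterlim_ident]]]
    by simp
qed

lemma S_tendsto_P: "((\<lambda>t. S t x) \<longlongrightarrow> P x) at_top"
proof (rule tendstoI)
  fix e :: real assume e: "e > 0"
  define y where "y = x - P x"
  have "\<forall>v\<in>VD. B y v = 0" unfolding y_def by (simp add: BV.B.diff_left B_P)
  then have "y \<in> closure (range J)" by (rule J_range_dense_in_complement)
  moreover have "e * coerc / (2 * MB) > 0" using e coerc_pos MB_pos by simp
  ultimately obtain s where s: "norm (J s - y) < e * coerc / (2 * MB)"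
    unfolding closure_approachable dist_norm by blast
  have close: "MB / coerc * norm (y - J s) < e / 2"
    using s MB_pos coerc_pos by (simp add: norm_minus_commute field_simps)
  have "eventually (\<lambda>t. norm (S t (J s)) < e / 2) at_top"
    using tendstoD[OF S_J_tendsto_0, of "e / 2"] e by simp
  then show "eventually (\<lambda>t. dist (S t x) (P x) < e) at_top"
    using eventually_ge_at_top[of 0]
  proof eventually_elim
    case (elim t)
    interpret St: bounded_linear "S t" using bounded_linear_S[OF elim(2)] .
    have "S t x - P x = S t (y - J s) + S t (J s)"
      unfolding y_def by (simp add: St.diff S_P[OF elim(2)])
    then have "norm (S t x - P x) \<le> MB / coerc * norm (y - J s) + norm (S t (J s))"
      by (metis norm_triangle_le add_right_mono norm_S_le[OF elim(2)])
    then show ?case using elim(1) close unfolding dist_norm by linarith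
  qed
qed

lemma Z_coercive_bound: "coerc * (norm (Z f))^2 \<le> norm f * norm (i (Z f))"
proof -
  have "coerc * (norm (Z f))^2 \<le> B (Z f) (Z f)" by (rule B_coercive)
  also have "\<dots> = H.rip f (i (Z f))" by (rule B_Z)
  also have "\<dots> \<le> norm f * norm (i (Z f))" using H.abs_rip_le by (rule abs_le_D1)
  finally show ?thesis .
qed

lemma i_Z_unit_ball_subset_compact:
  obtains C where "compact C" "(\<lambda>f. i (Z f)) ` cball 0 1 \<subseteq> C"
proof -
  obtain KZ where KZ: "KZ > 0" "\<And>f. norm (Z f) \<le> norm f * KZ"
    using bounded_linear.pos_bounded[OF bounded_linear_Z] by blast
  define R where "R = KZ + 1"
  have R: "R > 0" using KZ(1) unfolding R_def by simp
  have "compact ((\<lambda>y. R *\<^sub>R y) ` closure (i ` ball 0 1))"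
    using i_compact unfolding compact_op_def by (intro compact_scaling) blast
  moreover have "(\<lambda>f. i (Z f)) ` cball 0 1 \<subseteq> (\<lambda>y. R *\<^sub>R y) ` closure (i ` ball 0 1)"
  proof
    fix y assume "y \<in> (\<lambda>f. i (Z f)) ` cball 0 1"
    then obtain f where f: "norm f \<le> 1" "y = i (Z f)" by auto
    have "norm (Z f) < R" using KZ(2)[of f] f(1) KZ(1) unfolding R_def
      by (smt (verit) mult_left_le_one_le norm_ge_zero)
    then have "(1 / R) *\<^sub>R Z f \<in> ball 0 1" using R by (simp add: divide_less_eq)
    then have "i ((1 / R) *\<^sub>R Z f) \<in> closure (i ` ball 0 1)" by (intro closure_subset[THEN subsetD]) simp
    moreover have "y = R *\<^sub>R i ((1 / R) *\<^sub>R Z f)" using R by (simp add: f(2) i.scaleR)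
    ultimately show "y \<in> (\<lambda>y. R *\<^sub>R y) ` closure (i ` ball 0 1)" by (rule rev_image_eqI)
  qed
  ultimately show ?thesis by (rule that)
qed

lemma Z_unit_ball_finite_nets:
  assumes "\<delta> > 0"
  shows "\<exists>G. finite G \<and> G \<subseteq> Z ` cball 0 1 \<and> Z ` cball 0 1 \<subseteq> (\<Union>g\<in>G. ball g \<delta>)"
proof -
  interpret Z: bounded_linear Z by (rule bounded_linear_Z)
  define \<epsilon> where "\<epsilon> = coerc * \<delta>^2 / 2"
  have \<epsilon>: "\<epsilon> > 0" using assms coerc_pos unfolding \<epsilon>_def by simp
  obtain C where "compact C" "(\<lambda>f. i (Z f)) ` cball 0 1 \<subseteq> C" by (rule i_Z_unit_ball_subset_compact)
  from finite_net_of_subset_of_compact[OF this \<epsilon>]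
  obtain G' where G': "finite G'" "G' \<subseteq> (\<lambda>f. i (Z f)) ` cball 0 1"
      "(\<lambda>f. i (Z f)) ` cball 0 1 \<subseteq> (\<Union>g\<in>G'. ball g \<epsilon>)"
    by (elim exE conjE)
  obtain F where F: "F \<subseteq> cball 0 1" "finite F" "G' = (\<lambda>f. i (Z f)) ` F"
    using finite_subset_image[OF G'(1,2)] by (elim exE conjE)
  have "Z ` cball 0 1 \<subseteq> (\<Union>g\<in>Z ` F. ball g \<delta>)"
  proof
    fix x assume "x \<in> Z ` cball 0 1"
    then obtain f where f: "norm f \<le> 1" "x = Z f" by auto
    then have "i (Z f) \<in> (\<lambda>f. i (Z f)) ` cball 0 1" by simp
    then have "i (Z f) \<in> (\<Union>g\<in>G'. ball g \<epsilon>)" using G'(3) by (rule rev_subsetD)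
    then obtain g where g: "g \<in> F" "norm (i (Z f - Z g)) < \<epsilon>"
      unfolding F(3) by (auto simp: dist_norm norm_minus_commute i.diff)
    have "norm (f - g) \<le> 2"
      using f(1) F(1) g(1) norm_triangle_ineq4[of f g] by auto
    have "coerc * (norm (Z f - Z g))^2 \<le> norm (f - g) * norm (i (Z f - Z g))"
      using Z_coercive_bound[of "f - g"] by (simp add: Z.diff)
    also have "\<dots> \<le> 2 * norm (i (Z f - Z g))"
      using \<open>norm (f - g) \<le> 2\<close> by (simp add: mult_right_mono)
    also have "\<dots> < coerc * \<delta>^2" using g(2) unfolding \<epsilon>_def by simp
    finally have "(norm (Z f - Z g))^2 < \<delta>^2" using coerc_pos by simp
    then have "dist (Z g) x < \<delta>" using assms f(2) by (simp add: dist_norm norm_minus_commute power_less_imp_less_base)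
    then show "x \<in> (\<Union>g\<in>Z ` F. ball g \<delta>)" using g(1) by auto
  qed
  moreover have "Z ` F \<subseteq> Z ` cball 0 1" using F(1) by auto
  ultimately show ?thesis using F(2) by blast
qed

lemma norm_S_minus_P_le: "t \<ge> 0 \<Longrightarrow> norm (S t x - P x) \<le> 2 * MB / coerc * norm x"
  using norm_triangle_ineq4[of "S t x" "P x"] norm_S_le[of t x] norm_P_le[of x] by simp

lemma uniform_convergence_on_unit_ball:
  assumes "e > 0"
  shows "\<exists>T\<ge>0. \<forall>t\<ge>T. \<forall>f. norm f \<le> 1 \<longrightarrow> norm (i (S t (Z f) - P (Z f))) < e"
proof -
  obtain Ki where Ki: "Ki > 0" "\<And>x. norm (i x) \<le> norm x * Ki" using i.pos_bounded by blast
  define L where "L = 2 * MB / coerc * Ki"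
  have "L \<ge> 0" using Ki(1) MB_pos coerc_pos unfolding L_def by simp
  have lipschitz: "\<forall>x y. norm (i (S t x - P x) - i (S t y - P y)) \<le> L * norm (x - y)" if "t \<ge> 0" for t
  proof (intro allI)
    fix x y
    interpret St: bounded_linear "S t" by (rule bounded_linear_S[OF that])
    interpret P: bounded_linear P by (rule bounded_linear_P)
    have "i (S t x - P x) - i (S t y - P y) = i (S t (x - y) - P (x - y))"
      by (simp add: St.diff P.diff i.diff)
    also have "norm \<dots> \<le> norm (S t (x - y) - P (x - y)) * Ki" by (rule Ki(2))
    also have "\<dots> \<le> 2 * MB / coerc * norm (x - y) * Ki"
      using Ki(1) by (intro mult_right_mono norm_S_minus_P_le[OF that]) simp
    finally show "norm (i (S t x - P x) - i (S t y - P y)) \<le> L * norm (x - y)"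
      unfolding L_def by (simp add: mult_ac)
  qed
  have "eventually (\<lambda>t. \<forall>x y. norm (i (S t x - P x) - i (S t y - P y)) \<le> L * norm (x - y)) at_top"
    using eventually_ge_at_top[of 0] by (rule eventually_mono) (rule lipschitz)
  moreover have "((\<lambda>t. i (S t x - P x)) \<longlongrightarrow> 0) at_top" for x
    using i.tendsto[OF LIM_zero[OF S_tendsto_P]] by (simp add: i.zero)
  ultimately have "eventually (\<lambda>t. \<forall>x\<in>Z ` cball 0 1. norm (i (S t x - P x)) < e) at_top"
    using Z_unit_ball_finite_nets \<open>L \<ge> 0\<close> assms by (rule eventually_uniformly_small_on_totally_bounded)
  then obtain T where "\<forall>t\<ge>T. \<forall>f\<in>cball 0 1. norm (i (S t (Z f) - P (Z f))) < e"
    unfolding eventually_at_top_linorder by auto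
  then show ?thesis by (intro exI[of _ "max T 0"]) auto
qed

lemma onorm_R_mu_minus_R_D_tendsto_0:
  "((\<lambda>\<mu>. onorm (\<lambda>f. R_mu a ipH ipK i j \<mu> f - R_D a ipH i j f)) \<longlongrightarrow> 0) at_bot"
proof (rule tendstoI)
  fix e :: real assume "e > 0"
  then obtain T where T: "T \<ge> 0" "\<And>t f. t \<ge> T \<Longrightarrow> norm f \<le> 1 \<Longrightarrow> norm (i (S t (Z f) - P (Z f))) < e / 2"
    using uniform_convergence_on_unit_ball[of "e / 2"] by auto
  have "dist (onorm (\<lambda>f. R_mu a ipH ipK i j \<mu> f - R_D a ipH i j f)) 0 < e" if "\<mu> \<le> - T" for \<mu>
  proof -
    have \<mu>: "\<mu> \<le> 0" "-\<mu> \<ge> T" using that T(1) by auto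
    define D where "D f = R_mu a ipH ipK i j \<mu> f - R_D a ipH i j f" for f
    have D_eq: "D f = i (S (-\<mu>) (Z f) - P (Z f))" for f
      unfolding D_def by (simp add: R_mu_eq[OF \<mu>(1)] R_D_eq i.diff)
    have D: "bounded_linear D" unfolding D_def[abs_def]
      using cbounded_linear_R_mu[OF \<mu>(1)] cbounded_linear_R_D
      unfolding cbounded_linear_def by (intro bounded_linear_sub) auto
    have "onorm D \<le> e / 2"
      using norm_le_if_unit_ball_le[OF D, of "e / 2"] T(2)[OF \<mu>(2)] \<open>e > 0\<close>
      by (intro onorm_bound) (auto simp: D_eq less_imp_le)
    then show ?thesis using onorm_pos_le[OF D] \<open>e > 0\<close> unfolding D_def[abs_def] by simp
  qed
  then show "eventually (\<lambda>\<mu>. dist (onorm (\<lambda>f. R_mu a ipH ipK i j \<mu> f - R_D a ipH i j f)) 0 < e) at_bot"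
    unfolding eventually_at_bot_linorder by blast
qed

end

theorem lemma2p3:
  fixes cmV :: "complex \<Rightarrow> 'v::banach \<Rightarrow> 'v" and ipV :: "'v \<Rightarrow> 'v \<Rightarrow> complex"
    and cmH :: "complex \<Rightarrow> 'h::banach \<Rightarrow> 'h" and ipH :: "'h \<Rightarrow> 'h \<Rightarrow> complex"
    and cmK :: "complex \<Rightarrow> 'k::banach \<Rightarrow> 'k" and ipK :: "'k \<Rightarrow> 'k \<Rightarrow> complex"
    and i :: "'v \<Rightarrow> 'h" and j :: "'v \<Rightarrow> 'k" and a :: "'v \<Rightarrow> 'v \<Rightarrow> complex"
  assumes V: "complex_hilbert cmV ipV"
    and H: "complex_hilbert cmH ipH"
    and K: "complex_hilbert cmK ipK"
    and i_compact: "compact_op cmV cmH i" and i_inj: "inj i"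
    and j_compact: "compact_op cmV cmK j"
    and a_form: "sesquilinear_cont cmV a"
    and a_pos: "\<forall>u. Im (a u u) = 0 \<and> Re (a u u) \<ge> 0"
    and a_sym: "\<forall>u v. a v u = cnj (a u v)"
    and a_ell: "\<exists>\<omega>>0. \<exists>\<delta>>0. \<forall>u. Re (a u u) + \<omega> * (norm (i u))\<^sup>2 \<ge> \<delta> * (norm u)\<^sup>2"
  shows "(\<forall>\<mu>\<le>0. \<forall>f. \<exists>!u. \<forall>v. a u v - complex_of_real \<mu> * ipK (j u) (j v) + ipH (i u) (i v) = ipH f (i v))
       \<and> (\<forall>f. \<exists>!u. j u = 0 \<and> (\<forall>v. j v = 0 \<longrightarrow> a u v + ipH (i u) (i v) = ipH f (i v)))
       \<and> (\<forall>\<mu>\<le>0. cbounded_linear cmH cmH (R_mu a ipH ipK i j \<mu>))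
       \<and> cbounded_linear cmH cmH (R_D a ipH i j)
       \<and> ((\<lambda>\<mu>. onorm (\<lambda>f. R_mu a ipH ipK i j \<mu> f - R_D a ipH i j f)) \<longlongrightarrow> 0) at_bot"
proof -
  have "cbounded_linear cmV cmK j" using j_compact unfolding compact_op_def by blast
  then interpret penalty_setting cmV ipV cmH ipH cmK ipK i j a
    by unfold_locales (simp_all add: V H K i_compact a_form a_ell a_pos a_sym[rule_format, symmetric])
  show ?thesis
    unfolding penalized_solution_def[symmetric] dirichlet_solution_def[symmetric]
    by (simp add: penalized_solution_iff_S dirichlet_solution_iff_P cbounded_linear_R_mu
        cbounded_linear_R_D onorm_R_mu_minus_R_D_tendsto_0)
qed

end
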